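(* Under the hypotheses and notation of the Main Theorem (a formally integrable system $R_q\subset J_q(E)$ whose symbol $g_{q+s}$ is $2$-acyclic, ${\cal D}=\Phi\circ j_q:E\to F_0$, and for $t\ge s+1$ the symbols $h_t=\mathrm{im}(\sigma_t(\Phi))\subseteq S_tT^*\otimes F_0$, where $h_{s+1}$ is the symbol of $B_{s+1}=\mathrm{im}(\rho_{s+1}(\Phi))$ and $h_{s+1+r}$ is its $r$-th prolongation), let $s'\ge0$ be an integer. If the symbol $g_{q+s+s'}$ is $3$-acyclic, then the symbol $h_{s+s'+1}$ is $2$-acyclic.
   Context: $\sigma_t(\Phi):S_{q+t}T^*\otimes E\to S_tT^*\otimes F_0$ is the symbol-level prolongation of $\Phi$. The Spencer map $\delta$ on $\wedge^sT^*\otimes S_{p+1}T^*\otimes F$ is $(\delta\omega)_\mu=dx^i\wedge\omega_{\mu+1_i}$, restricting to any symbol and its prolongations; a symbol $h$ is $k$-acyclic if the $\delta$-cohomology of all its prolongations vanishes at $\wedge^jT^*\otimes(\cdot)$ for $1\le j\le k$. (Applied via the Main Theorem, this means the compatibility conditions of ${\cal D}_1$ are then generated by an operator of order $s'+1$.) *)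

theory Defs
  imports Main
begin

text \<open>Coordinate model of the symbol-level (multilinear algebra) setting.
  n = dim of the base (T* has basis dx^0..dx^(n-1)), m = fibre dim of E,
  m0 = fibre dim of F_0, coefficients in a field.
  An element of S_p T* (x) E is a function omega mu k (k < m).
  An element of wedge^j T* (x) S_p T* (x) E is a function omega I mu k
  with I a j-element subset of {..<n} (the sorted index dx^I).\<close>

definition mi :: "nat \<Rightarrow> nat \<Rightarrow> (nat \<Rightarrow> nat) set" where
  "mi n p = {mu. (\<forall>i\<ge>n. mu i = 0) \<and> sum mu {..<n} = p}"

definition SE :: "nat \<Rightarrow> nat \<Rightarrow> nat \<Rightarrow> ((nat \<Rightarrow> nat) \<Rightarrow> nat \<Rightarrow> 'a::field) set" where
  "SE n m p = {w. \<forall>mu k. (mu \<notin> mi n p \<or> m \<le> k) \<longrightarrow> w mu k = 0}"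

definition WSE :: "nat \<Rightarrow> nat \<Rightarrow> nat \<Rightarrow> nat \<Rightarrow>
    (nat set \<Rightarrow> (nat \<Rightarrow> nat) \<Rightarrow> nat \<Rightarrow> 'a::field) set" where
  "WSE n m j p = {w. \<forall>I mu k. (\<not> (I \<subseteq> {..<n} \<and> card I = j) \<or> mu \<notin> mi n p \<or> m \<le> k)
                        \<longrightarrow> w I mu k = 0}"

definition spencer :: "(nat set \<Rightarrow> (nat \<Rightarrow> nat) \<Rightarrow> nat \<Rightarrow> 'a::field) \<Rightarrow>
    (nat set \<Rightarrow> (nat \<Rightarrow> nat) \<Rightarrow> nat \<Rightarrow> 'a)" where
  "spencer w = (\<lambda>J mu k. \<Sum>i\<in>J. (-1) ^ card {l\<in>J. l < i} * w (J - {i}) (mu(i := Suc (mu i))) k)"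

definition prol :: "nat \<Rightarrow> nat \<Rightarrow> ((nat \<Rightarrow> nat) \<Rightarrow> nat \<Rightarrow> 'a::field) set \<Rightarrow> nat \<Rightarrow> nat \<Rightarrow>
    ((nat \<Rightarrow> nat) \<Rightarrow> nat \<Rightarrow> 'a) set" where
  "prol n m g p r = {w \<in> SE n m (p + r). \<forall>nu \<in> mi n r. (\<lambda>mu k. w (\<lambda>i. mu i + nu i) k) \<in> g}"

definition WG :: "nat \<Rightarrow> nat \<Rightarrow> ((nat \<Rightarrow> nat) \<Rightarrow> nat \<Rightarrow> 'a::field) set \<Rightarrow> nat \<Rightarrow> nat \<Rightarrow> nat \<Rightarrow>
    (nat set \<Rightarrow> (nat \<Rightarrow> nat) \<Rightarrow> nat \<Rightarrow> 'a) set" where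
  "WG n m g p r j = {w \<in> WSE n m j (p + r). \<forall>I. I \<subseteq> {..<n} \<and> card I = j \<longrightarrow> w I \<in> prol n m g p r}"

definition k_acyclic :: "nat \<Rightarrow> nat \<Rightarrow> nat \<Rightarrow> ((nat \<Rightarrow> nat) \<Rightarrow> nat \<Rightarrow> 'a::field) set \<Rightarrow> nat \<Rightarrow> bool" where
  "k_acyclic n m p g k \<longleftrightarrow>
     (\<forall>r j w. 1 \<le> j \<and> j \<le> k \<and> w \<in> WG n m g p r j \<and> spencer w = (\<lambda>_ _ _. 0)
        \<longrightarrow> (\<exists>eta \<in> WG n m g p (Suc r) (j - 1). spencer eta = w))"

text \<open>sigma_t(Phi) : S_(q+t) T* (x) E -> S_t T* (x) F_0, where the symbol
  sigma(Phi) : S_q T* (x) E -> F_0 has coefficient matrix A tau mu k.\<close>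
definition sigmat :: "nat \<Rightarrow> nat \<Rightarrow> nat \<Rightarrow> nat \<Rightarrow> (nat \<Rightarrow> (nat \<Rightarrow> nat) \<Rightarrow> nat \<Rightarrow> 'a::field) \<Rightarrow> nat \<Rightarrow>
    ((nat \<Rightarrow> nat) \<Rightarrow> nat \<Rightarrow> 'a) \<Rightarrow> ((nat \<Rightarrow> nat) \<Rightarrow> nat \<Rightarrow> 'a)" where
  "sigmat n m m0 q A t w = (\<lambda>nu tau. if nu \<in> mi n t \<and> tau < m0
      then (\<Sum>mu\<in>mi n q. \<Sum>k<m. A tau mu k * w (\<lambda>i. mu i + nu i) k) else 0)"

text \<open>g_q = ker sigma(Phi) (symbol of R_q), h_t = im sigma_t(Phi).\<close>
definition gsym :: "nat \<Rightarrow> nat \<Rightarrow> nat \<Rightarrow> nat \<Rightarrow> (nat \<Rightarrow> (nat \<Rightarrow> nat) \<Rightarrow> nat \<Rightarrow> 'a::field) \<Rightarrow>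
    ((nat \<Rightarrow> nat) \<Rightarrow> nat \<Rightarrow> 'a) set" where
  "gsym n m m0 q A = {w \<in> SE n m q. sigmat n m m0 q A 0 w = (\<lambda>_ _. 0)}"

definition hsym :: "nat \<Rightarrow> nat \<Rightarrow> nat \<Rightarrow> nat \<Rightarrow> (nat \<Rightarrow> (nat \<Rightarrow> nat) \<Rightarrow> nat \<Rightarrow> 'a::field) \<Rightarrow> nat \<Rightarrow>
    ((nat \<Rightarrow> nat) \<Rightarrow> nat \<Rightarrow> 'a) set" where
  "hsym n m m0 q A t = sigmat n m m0 q A t ` SE n m (q + t)"

end

theory Submission
  imports Defs
begin

text \<open>Let \<open>w\<close> be a \<open>\<delta>\<close>-closed form with values in \<open>h\<^sub>t\<close>, \<open>t = s + s' + 1 + r\<close>. Lift it through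
  \<open>\<sigma>\<^sub>t(\<Phi>)\<close> to a form \<open>u\<close> with values in \<open>S\<^sub>q\<^sub>+\<^sub>tT\<^sup>* \<otimes> E\<close>. As \<open>\<sigma>\<close> commutes with \<open>\<delta>\<close>, \<open>\<delta>u\<close> takes
  values in the kernel \<open>g\<^sub>q\<^sub>+\<^sub>t\<^sub>-\<^sub>1\<close>, so 3-acyclicity of \<open>g\<^sub>q\<^sub>+\<^sub>s\<^sub>+\<^sub>s\<^sub>'\<close> gives \<open>\<delta>u = \<delta>y\<close> with \<open>y\<close>
  valued in \<open>g\<^sub>q\<^sub>+\<^sub>t\<close>. Then \<open>u - y\<close> is \<open>\<delta>\<close>-closed, hence \<open>u - y = \<delta>z\<close> by exactness of \<open>\<delta>\<close> on the
  full spaces, and \<open>\<eta> = \<sigma>(z)\<close> satisfies \<open>\<delta>\<eta> = w\<close>. The same chase in form degree 1, with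
  2-acyclicity of \<open>g\<^sub>q\<^sub>+\<^sub>s\<close>, shows that the prolongations of \<open>h\<^sub>t\<close> are the \<open>h\<^sub>t\<^sub>+\<^sub>r\<close> once
  \<open>t > s\<close>, so these forms are exactly the cochains of the symbol \<open>h\<^sub>s\<^sub>+\<^sub>s\<^sub>'\<^sub>+\<^sub>1\<close>.\<close>

section \<open>Multi-indices\<close>

abbreviation incr :: "nat \<Rightarrow> (nat \<Rightarrow> nat) \<Rightarrow> nat \<Rightarrow> nat" where
  "incr i nu \<equiv> nu(i := Suc (nu i))"

abbreviation decr :: "nat \<Rightarrow> (nat \<Rightarrow> nat) \<Rightarrow> nat \<Rightarrow> nat" where
  "decr i nu \<equiv> nu(i := nu i - 1)"

lemma sum_incr:
  assumes "i < n"
  shows "sum (incr i nu) {..<n} = Suc (sum nu {..<n})"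
proof -
  have split: "sum f {..<n} = f i + sum f ({..<n} - {i})" for f :: "nat \<Rightarrow> nat"
    by (rule sum.remove) (use assms in auto)
  have "sum (incr i nu) ({..<n} - {i}) = sum nu ({..<n} - {i})"
    by (rule sum.cong) auto
  then show ?thesis using split[of "incr i nu"] split[of nu] by simp
qed

lemma incr_in_mi_iff: "incr i nu \<in> mi n (Suc p) \<longleftrightarrow> i < n \<and> nu \<in> mi n p"
proof
  assume h: "incr i nu \<in> mi n (Suc p)"
  then have "i < n" by (auto simp: mi_def dest: spec[of _ i])
  moreover have "\<forall>j\<ge>n. nu j = 0" using h \<open>i < n\<close> by (auto simp: mi_def)
  moreover have "sum nu {..<n} = p" using h sum_incr[OF \<open>i < n\<close>, of nu] by (simp add: mi_def)
  ultimately show "i < n \<and> nu \<in> mi n p" by (simp add: mi_def)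
next
  assume "i < n \<and> nu \<in> mi n p"
  then show "incr i nu \<in> mi n (Suc p)" using sum_incr[of i n nu] by (auto simp: mi_def)
qed

lemma incr_notin_mi: "n \<le> i \<Longrightarrow> incr i nu \<notin> mi n p"
  by (auto simp: mi_def)

lemma mi_0: "mi n 0 = {\<lambda>_. 0}"
  by (auto simp: mi_def fun_eq_iff) (metis not_le lessThan_iff)

lemma mi_Suc_obtain_pos:
  assumes "rho \<in> mi n (Suc p)"
  obtains c where "c < n" "0 < rho c"
proof -
  have "sum rho {..<n} \<noteq> 0" using assms by (simp add: mi_def)
  then show ?thesis using that by (metis lessThan_iff neq0_conv sum.neutral)
qed

lemma incr_decr: "0 < nu c \<Longrightarrow> incr c (decr c nu) = nu"
  by (auto simp: fun_eq_iff)

lemma decr_incr: "decr a (incr a nu) = nu"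
  by (auto simp: fun_eq_iff)

lemma incr_decr_commute: "c \<noteq> a \<Longrightarrow> incr a (decr c nu) = decr c (incr a nu)"
  by (auto simp: fun_eq_iff)

lemma decr_in_mi: "rho \<in> mi n (Suc p) \<Longrightarrow> 0 < rho c \<Longrightarrow> decr c rho \<in> mi n p"
  using incr_in_mi_iff[where i = c and nu = "decr c rho"] incr_decr[of rho c] by simp

lemma mi_add: "a \<in> mi n p \<Longrightarrow> b \<in> mi n r \<Longrightarrow> (\<lambda>i. a i + b i) \<in> mi n (p + r)"
  by (auto simp: mi_def sum.distrib)

lemma mi_add_cancel: "(\<lambda>i. a i + b i) \<in> mi n (p + r) \<Longrightarrow> b \<in> mi n r \<Longrightarrow> a \<in> mi n p"
  by (auto simp: mi_def sum.distrib)

lemma mi_add_decomp: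
  "rho \<in> mi n (a + b) \<Longrightarrow> \<exists>v1\<in>mi n a. \<exists>v2\<in>mi n b. rho = (\<lambda>i. v1 i + v2 i)"
proof (induction b arbitrary: rho)
  case 0
  then show ?case by (auto simp: mi_0)
next
  case (Suc b)
  then obtain c where c: "c < n" "0 < rho c" using mi_Suc_obtain_pos[of rho n "a + b"] by auto
  then obtain v1 v2 where v: "v1 \<in> mi n a" "v2 \<in> mi n b" "decr c rho = (\<lambda>i. v1 i + v2 i)"
    using Suc decr_in_mi by (metis add_Suc_right)
  have "incr c v2 \<in> mi n (Suc b)" using incr_in_mi_iff v c by auto
  moreover have "rho = (\<lambda>i. v1 i + incr c v2 i)"
  proof
    fix i show "rho i = v1 i + incr c v2 i"
      using fun_cong[OF v(3), of i] c by (cases "i = c") auto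
  qed
  ultimately show ?case using v by blast
qed

definition min_supp :: "(nat \<Rightarrow> nat) \<Rightarrow> nat" where
  "min_supp nu = (LEAST c. 0 < nu c)"

lemma min_supp_pos: "0 < nu c \<Longrightarrow> 0 < nu (min_supp nu)"
  unfolding min_supp_def by (rule LeastI)

lemma min_supp_le: "0 < nu c \<Longrightarrow> min_supp nu \<le> c"
  unfolding min_supp_def by (rule Least_le)

lemma less_min_supp: "d < min_supp nu \<Longrightarrow> nu d = 0"
  unfolding min_supp_def using not_less_Least by blast

lemma min_supp_eqI: "0 < nu c \<Longrightarrow> (\<And>d. d < c \<Longrightarrow> nu d = 0) \<Longrightarrow> min_supp nu = c"
  by (metis min_supp_le min_supp_pos le_neq_implies_less not_less0)

lemma min_supp_incr_le: "min_supp (incr a nu) \<le> a"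
  by (rule min_supp_le) simp

section \<open>The Spencer operator\<close>

lemma spencer_singleton: "spencer w {a} mu k = w {} (incr a mu) k"
  by (simp add: spencer_def cong: conj_cong)

lemma spencer_pair:
  assumes "a < b"
  shows "spencer w {a, b} mu k = w {b} (incr a mu) k - w {a} (incr b mu) k"
proof -
  define f where "f i = (-1::'a) ^ card {l\<in>{a, b}. l < i} * w ({a, b} - {i}) (incr i mu) k" for i
  have "spencer w {a, b} mu k = f a + f b" using assms by (simp add: spencer_def f_def)
  moreover have signs: "{l \<in> {a, b}. l < a} = {}" "{l \<in> {a, b}. l < b} = {a}"
    "{a, b} - {a} = {b}" "{a, b} - {b} = {a}"
    using assms by auto
  ultimately show ?thesis unfolding f_def signs by simp
qed

lemma spencer_triple:
  assumes "a < b" "b < c"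
  shows "spencer w {a, b, c} mu k =
    w {b, c} (incr a mu) k - w {a, c} (incr b mu) k + w {a, b} (incr c mu) k"
proof -
  define f where "f i = (-1::'a) ^ card {l\<in>{a, b, c}. l < i} * w ({a, b, c} - {i}) (incr i mu) k"
    for i
  have "spencer w {a, b, c} mu k = f a + f b + f c" using assms by (simp add: spencer_def f_def)
  moreover have signs: "{l \<in> {a, b, c}. l < a} = {}" "{l \<in> {a, b, c}. l < b} = {a}"
    "{l \<in> {a, b, c}. l < c} = {a, b}"
    "{a, b, c} - {a} = {b, c}" "{a, b, c} - {b} = {a, c}" "{a, b, c} - {c} = {a, b}"
    using assms by auto
  ultimately show ?thesis unfolding f_def signs using assms by simp
qed

lemma spencer_eq_0_if_card:
  assumes "\<And>I mu k. w I mu k \<noteq> 0 \<Longrightarrow> finite I \<and> card I = j"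
    and "\<not> (finite J \<and> card J = Suc j)"
  shows "spencer w J mu k = 0"
proof (cases "finite J")
  case False
  then show ?thesis by (simp add: spencer_def)
next
  case True
  have "w (J - {i}) (incr i mu) k = 0" if i: "i \<in> J" for i
  proof (rule ccontr)
    assume "w (J - {i}) (incr i mu) k \<noteq> 0"
    then have "card (J - {i}) = j" using assms(1) by blast
    then show False using assms(2) True i card_Suc_Diff1 by metis
  qed
  then show ?thesis by (simp add: spencer_def)
qed

lemma spencer_diff:
  "spencer (\<lambda>I mu k. a I mu k - b I mu k) = (\<lambda>J mu k. spencer a J mu k - spencer b J mu k)"
  by (simp add: spencer_def fun_eq_iff sum_subtractf algebra_simps)

lemma WSE_component: "w \<in> WSE n m j p \<Longrightarrow> w I \<in> SE n m p"
  by (auto simp: WSE_def SE_def)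

lemma WSE_diff:
  "a \<in> WSE n m j p \<Longrightarrow> b \<in> WSE n m j p \<Longrightarrow> (\<lambda>I mu k. a I mu k - b I mu k) \<in> WSE n m j p"
  by (auto simp: WSE_def)

lemma WSE_eq_0: "w \<in> WSE n m j p \<Longrightarrow> \<not> (I \<subseteq> {..<n} \<and> card I = j) \<Longrightarrow> w I = (\<lambda>_ _. 0)"
  unfolding WSE_def by (intro ext) blast

lemma spencer_WSE:
  assumes w: "w \<in> WSE n m j (Suc p)"
  shows "spencer w \<in> WSE n m (Suc j) p"
  unfolding WSE_def
proof (intro CollectI allI impI)
  fix J mu k
  assume h: "\<not> (J \<subseteq> {..<n} \<and> card J = Suc j) \<or> mu \<notin> mi n p \<or> m \<le> k"
  have "w (J - {i}) (incr i mu) k = 0" if i: "i \<in> J" and fin: "finite J" for i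
  proof -
    consider "card J \<noteq> Suc j" | x where "x \<in> J" "n \<le> x" | "mu \<notin> mi n p" | "m \<le> k"
      using h by (meson lessThan_iff not_le subsetI)
    then show ?thesis
    proof cases
      case 1
      then have "card (J - {i}) \<noteq> j" using fin i card_Suc_Diff1 by metis
      then show ?thesis using w by (auto simp: WSE_def)
    next
      case (2 x)
      then have "incr i mu \<notin> mi n (Suc p) \<or> \<not> (J - {i}) \<subseteq> {..<n}"
        using incr_notin_mi by (cases "i = x") auto
      then show ?thesis using w by (auto simp: WSE_def)
    next
      case 3
      then show ?thesis using w incr_in_mi_iff by (auto simp: WSE_def)
    next
      case 4
      then show ?thesis using w by (auto simp: WSE_def)
    qed
  qed
  then show "spencer w J mu k = 0" by (cases "finite J") (simp_all add: spencer_def)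
qed

lemma sum_sum_antisym_eq_0:
  fixes F :: "nat \<Rightarrow> nat \<Rightarrow> 'a::ab_group_add"
  assumes fin: "finite J"
    and anti: "\<And>i i'. i \<in> J \<Longrightarrow> i' \<in> J \<Longrightarrow> i < i' \<Longrightarrow> F i' i = - F i i'"
  shows "(\<Sum>i\<in>J. \<Sum>i'\<in>J - {i}. F i i') = 0"
proof -
  have "(\<Sum>i\<in>J. \<Sum>i'\<in>J - {i}. F i i') = (\<Sum>i\<in>J. \<Sum>i'\<in>J. if i' \<noteq> i then F i i' else 0)"
  proof (rule sum.cong[OF refl])
    fix i
    have "{i' \<in> J. i' \<noteq> i} = J - {i}" by auto
    then show "(\<Sum>i'\<in>J - {i}. F i i') = (\<Sum>i'\<in>J. if i' \<noteq> i then F i i' else 0)"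
      using sum.inter_filter[OF fin, of "F i" "\<lambda>i'. i' \<noteq> i"] by simp
  qed
  also have "\<dots> = (\<Sum>i\<in>J. \<Sum>i'\<in>J. (if i' < i then F i i' else 0) + (if i < i' then F i i' else 0))"
    by (intro sum.cong refl) auto
  also have "\<dots> = (\<Sum>i\<in>J. \<Sum>i'\<in>J. if i' < i then F i i' else 0)
      + (\<Sum>i'\<in>J. \<Sum>i\<in>J. if i < i' then F i i' else 0)"
    by (simp add: sum.distrib) (rule sum.swap)
  also have "(\<Sum>i'\<in>J. \<Sum>i\<in>J. if i < i' then F i i' else 0)
      = - (\<Sum>i'\<in>J. \<Sum>i\<in>J. if i < i' then F i' i else 0)"
    unfolding sum_negf[symmetric] by (intro sum.cong refl) (use anti in auto)
  finally show ?thesis by simp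
qed

text \<open>\<open>\<delta>\<^sup>2 = 0\<close>: the two orders of removing \<open>i < i'\<close> from \<open>J\<close> carry opposite signs.\<close>
lemma spencer_spencer: "spencer (spencer w) = (\<lambda>_ _ _. 0)"
proof (intro ext)
  fix J mu k
  show "spencer (spencer w) J mu k = 0"
  proof (cases "finite J")
    case False
    then show ?thesis by (simp add: spencer_def)
  next
    case fin: True
    define sg where "sg K i = ((-1::'a) ^ card {l\<in>K. l < i})" for K :: "nat set" and i
    define F where "F i i' = sg J i * sg (J - {i}) i' * w (J - {i} - {i'}) (incr i' (incr i mu)) k"
      for i i'
    have "spencer (spencer w) J mu k = (\<Sum>i\<in>J. \<Sum>i'\<in>J - {i}. F i i')"
      unfolding spencer_def F_def sg_def by (simp add: sum_distrib_left mult.assoc)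
    moreover have "F i' i = - F i i'" if i: "i \<in> J" "i' \<in> J" "i < i'" for i i'
    proof -
      have "J - {i} - {i'} = J - {i'} - {i}" "incr i' (incr i mu) = incr i (incr i' mu)"
        using i by (auto simp: fun_eq_iff)
      moreover have "{l \<in> J. l < i'} = insert i {l \<in> J - {i}. l < i'}"
        "{l \<in> J - {i'}. l < i} = {l \<in> J. l < i}"
        using i by auto
      ultimately show ?thesis unfolding F_def sg_def using fin by simp
    qed
    ultimately show ?thesis using sum_sum_antisym_eq_0[OF fin, of F] by simp
  qed
qed

section \<open>Exactness of \<open>\<delta>\<close> on the full spaces\<close>

lemma closed_1form_swap:
  assumes closed: "spencer u = (\<lambda>_ _ _. 0)" and "c < a" "0 < mu c"
  shows "u {a} mu k = u {c} (decr c (incr a mu)) k"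
proof -
  have "c \<noteq> a" using \<open>c < a\<close> by simp
  have "0 = spencer u {c, a} (decr c mu) k" using closed by simp
  also have "\<dots> = u {a} (incr c (decr c mu)) k - u {c} (incr a (decr c mu)) k"
    by (rule spencer_pair[OF \<open>c < a\<close>])
  also have "\<dots> = u {a} mu k - u {c} (decr c (incr a mu)) k"
    by (simp only: incr_decr[of mu c, OF \<open>0 < mu c\<close>] incr_decr_commute[OF \<open>c \<noteq> a\<close>])
  finally show ?thesis by simp
qed

lemma closed_2form_swap:
  assumes closed: "spencer v = (\<lambda>_ _ _. 0)" and "c < a" "a < b" "0 < mu c"
  shows "v {a, b} mu k = v {c, b} (decr c (incr a mu)) k - v {c, a} (decr c (incr b mu)) k"
proof -
  have "c \<noteq> a" "c \<noteq> b" using assms(2,3) by simp_all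
  have "0 = spencer v {c, a, b} (decr c mu) k" using closed by simp
  also have "\<dots> = v {a, b} (incr c (decr c mu)) k - v {c, b} (incr a (decr c mu)) k
      + v {c, a} (incr b (decr c mu)) k"
    by (rule spencer_triple[OF \<open>c < a\<close> \<open>a < b\<close>])
  also have "\<dots> = v {a, b} mu k - v {c, b} (decr c (incr a mu)) k + v {c, a} (decr c (incr b mu)) k"
    by (simp only: incr_decr[of mu c, OF \<open>0 < mu c\<close>] incr_decr_commute[OF \<open>c \<noteq> a\<close>]
        incr_decr_commute[OF \<open>c \<noteq> b\<close>])
  finally show ?thesis by (simp add: algebra_simps)
qed

text \<open>Contracting homotopies for \<open>\<delta>\<close> on the full spaces: a coefficient at \<open>\<nu>\<close> is read off
  after removing one \<open>dx\<close> in the least variable \<open>min_supp \<nu>\<close> occurring in \<open>\<nu>\<close>.\<close>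

definition spencer_contr0 :: "nat \<Rightarrow> nat \<Rightarrow> (nat set \<Rightarrow> (nat \<Rightarrow> nat) \<Rightarrow> nat \<Rightarrow> 'a::zero) \<Rightarrow>
    nat set \<Rightarrow> (nat \<Rightarrow> nat) \<Rightarrow> nat \<Rightarrow> 'a" where
  "spencer_contr0 n p u I nu k =
     (if I = {} \<and> nu \<in> mi n (Suc p) then u {min_supp nu} (decr (min_supp nu) nu) k else 0)"

definition spencer_contr1 :: "nat \<Rightarrow> nat \<Rightarrow> (nat set \<Rightarrow> (nat \<Rightarrow> nat) \<Rightarrow> nat \<Rightarrow> 'a::zero) \<Rightarrow>
    nat set \<Rightarrow> (nat \<Rightarrow> nat) \<Rightarrow> nat \<Rightarrow> 'a" where
  "spencer_contr1 n p v I nu k =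
     (if (\<exists>b. I = {b}) \<and> nu \<in> mi n (Suc p) \<and> min_supp nu < the_elem I
      then v {min_supp nu, the_elem I} (decr (min_supp nu) nu) k else 0)"

lemma spencer_contr0_WSE:
  assumes "u \<in> WSE n m 1 p"
  shows "spencer_contr0 n p u \<in> WSE n m 0 (Suc p)"
  unfolding WSE_def
proof (intro CollectI allI impI)
  fix I nu k
  assume h: "\<not> (I \<subseteq> {..<n} \<and> card I = 0) \<or> nu \<notin> mi n (Suc p) \<or> m \<le> k"
  show "spencer_contr0 n p u I nu k = 0"
  proof (cases "I = {} \<and> nu \<in> mi n (Suc p)")
    case True
    then have "m \<le> k" using h by simp
    then show ?thesis using assms True by (simp add: spencer_contr0_def WSE_def)
  next
    case False
    then show ?thesis by (auto simp: spencer_contr0_def)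
  qed
qed

lemma spencer_spencer_contr0:
  assumes u: "u \<in> WSE n m 1 p" and closed: "spencer u = (\<lambda>_ _ _. 0)"
  shows "spencer (spencer_contr0 n p u) = u"
proof (intro ext)
  fix J mu k
  show "spencer (spencer_contr0 n p u) J mu k = u J mu k"
  proof (cases "finite J \<and> card J = 1")
    case True
    then obtain a where J: "J = {a}" by (metis One_nat_def card_1_singleton_iff)
    show ?thesis
    proof (cases "incr a mu \<in> mi n (Suc p)")
      case True
      define c where "c = min_supp (incr a mu)"
      have val: "spencer (spencer_contr0 n p u) J mu k = u {c} (decr c (incr a mu)) k"
        unfolding J spencer_singleton spencer_contr0_def c_def using True by simp
      have "c \<le> a" unfolding c_def by (rule min_supp_incr_le)
      show ?thesis
      proof (cases "c = a")
        case True
        then show ?thesis using val J by (simp add: decr_incr)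
      next
        case False
        with \<open>c \<le> a\<close> have "c < a" by simp
        moreover have "0 < mu c"
          using min_supp_pos[of "incr a mu" a] \<open>c < a\<close> unfolding c_def by simp
        ultimately show ?thesis using val J closed_1form_swap[OF closed] by simp
      qed
    next
      case False
      then have "a \<ge> n \<or> mu \<notin> mi n p" using incr_in_mi_iff by auto
      then show ?thesis
        using False u J by (auto simp: spencer_singleton spencer_contr0_def WSE_def)
    qed
  next
    case False
    have "spencer (spencer_contr0 n p u) J mu k = 0"
      by (rule spencer_eq_0_if_card[where j = 0]) (use False in \<open>auto simp: spencer_contr0_def split: if_splits\<close>)
    moreover have "\<not> (J \<subseteq> {..<n} \<and> card J = 1)" using False finite_subset by blast
    ultimately show ?thesis using u by (simp add: WSE_def)
  qed
qed

lemma spencer_contr1_singleton: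
  "spencer_contr1 n p v {b} nu k =
     (if nu \<in> mi n (Suc p) \<and> min_supp nu < b then v {min_supp nu, b} (decr (min_supp nu) nu) k else 0)"
  by (simp add: spencer_contr1_def)

lemma spencer_contr1_nonzero:
  assumes v: "v \<in> WSE n m 2 p" and nz: "spencer_contr1 n p v I nu k \<noteq> 0"
  obtains b where "I = {b}" "b < n" "nu \<in> mi n (Suc p)" "k < m"
proof -
  from nz obtain b where b: "I = {b}" by (auto simp: spencer_contr1_def split: if_splits)
  from nz have nu: "nu \<in> mi n (Suc p)" "min_supp nu < b"
    and "v {min_supp nu, b} (decr (min_supp nu) nu) k \<noteq> 0"
    unfolding b spencer_contr1_singleton by (simp_all split: if_splits)
  then have "\<not> (\<not> ({min_supp nu, b} \<subseteq> {..<n} \<and> card {min_supp nu, b} = 2)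
      \<or> decr (min_supp nu) nu \<notin> mi n p \<or> m \<le> k)"
    using v unfolding WSE_def by blast
  then show ?thesis using that b nu by simp
qed

lemma spencer_contr1_WSE:
  assumes "v \<in> WSE n m 2 p"
  shows "spencer_contr1 n p v \<in> WSE n m 1 (Suc p)"
  unfolding WSE_def
proof (intro CollectI allI impI)
  fix I nu k
  assume h: "\<not> (I \<subseteq> {..<n} \<and> card I = 1) \<or> nu \<notin> mi n (Suc p) \<or> m \<le> k"
  show "spencer_contr1 n p v I nu k = 0"
  proof (rule ccontr)
    assume "spencer_contr1 n p v I nu k \<noteq> 0"
    then obtain b where "I = {b}" "b < n" "nu \<in> mi n (Suc p)" "k < m"
      by (rule spencer_contr1_nonzero[OF assms])
    then show False using h by simp
  qed
qed

lemma spencer_contr1_pair: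
  assumes closed: "spencer v = (\<lambda>_ _ _. 0)" and "a < b" "b < n" "mu \<in> mi n p"
  shows "spencer (spencer_contr1 n p v) {a, b} mu k = v {a, b} mu k"
proof -
  have in_mi: "incr a mu \<in> mi n (Suc p)" "incr b mu \<in> mi n (Suc p)"
    using assms incr_in_mi_iff by auto
  have sp: "spencer (spencer_contr1 n p v) {a, b} mu k =
      spencer_contr1 n p v {b} (incr a mu) k - spencer_contr1 n p v {a} (incr b mu) k"
    by (rule spencer_pair[OF \<open>a < b\<close>])
  show ?thesis
  proof (cases "\<exists>d<a. 0 < mu d")
    case True
    then obtain d where "d < a" "0 < mu d" by blast
    define c where "c = min_supp mu"
    have pos: "0 < mu c" and "c < a" and below: "\<And>e. e < c \<Longrightarrow> mu e = 0"
      using min_supp_pos[of mu d] min_supp_le[of mu d] less_min_supp \<open>0 < mu d\<close> \<open>d < a\<close>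
      unfolding c_def by auto
    have "min_supp (incr a mu) = c" "min_supp (incr b mu) = c"
      by (rule min_supp_eqI; use pos below \<open>c < a\<close> \<open>a < b\<close> in auto)+
    then show ?thesis
      unfolding sp spencer_contr1_singleton
      using in_mi \<open>c < a\<close> \<open>a < b\<close> closed_2form_swap[where mu = mu, OF closed \<open>c < a\<close> \<open>a < b\<close> pos] by simp
  next
    case False
    have "min_supp (incr a mu) = a"
      by (rule min_supp_eqI) (use False in auto)
    moreover have "\<not> min_supp (incr b mu) < a"
    proof
      assume lt: "min_supp (incr b mu) < a"
      have "0 < incr b mu (min_supp (incr b mu))" by (rule min_supp_pos[of _ b]) simp
      then show False using lt False \<open>a < b\<close> by (auto split: if_splits)
    qed
    ultimately show ?thesis
      unfolding sp spencer_contr1_singleton using in_mi \<open>a < b\<close> by (simp add: decr_incr)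
  qed
qed

lemma spencer_spencer_contr1:
  assumes v: "v \<in> WSE n m 2 p" and closed: "spencer v = (\<lambda>_ _ _. 0)"
  shows "spencer (spencer_contr1 n p v) = v"
proof (intro ext)
  fix J mu k
  show "spencer (spencer_contr1 n p v) J mu k = v J mu k"
  proof (cases "finite J \<and> card J = 2")
    case True
    then obtain x y where "J = {x, y}" "x \<noteq> y" by (auto simp: card_2_iff)
    then obtain a b where J: "J = {a, b}" and "a < b" by (metis insert_commute nat_neq_iff)
    show ?thesis
    proof (cases "b < n \<and> mu \<in> mi n p")
      case True
      then show ?thesis using spencer_contr1_pair[OF closed \<open>a < b\<close>] J by simp
    next
      case False
      then have "v J mu k = 0" using v J by (auto simp: WSE_def)
      moreover have "spencer_contr1 n p v {b} (incr a mu) k = 0"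
      proof (rule ccontr)
        assume "spencer_contr1 n p v {b} (incr a mu) k \<noteq> 0"
        then obtain b' where "{b} = {b'}" "b' < n" "incr a mu \<in> mi n (Suc p)"
          by (rule spencer_contr1_nonzero[OF v])
        then show False using False incr_in_mi_iff by auto
      qed
      moreover have "spencer_contr1 n p v {a} (incr b mu) k = 0"
      proof (rule ccontr)
        assume "spencer_contr1 n p v {a} (incr b mu) k \<noteq> 0"
        then obtain a' where "incr b mu \<in> mi n (Suc p)"
          by (rule spencer_contr1_nonzero[OF v])
        then show False using False incr_in_mi_iff by auto
      qed
      ultimately show ?thesis
        using spencer_pair[OF \<open>a < b\<close>, of "spencer_contr1 n p v"] J by simp
    qed
  next
    case False
    have "spencer (spencer_contr1 n p v) J mu k = 0"
    proof (rule spencer_eq_0_if_card[where j = 1])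
      fix I nu k'
      assume "spencer_contr1 n p v I nu k' \<noteq> 0"
      then obtain b where "I = {b}" by (rule spencer_contr1_nonzero[OF v])
      then show "finite I \<and> card I = 1" by simp
    next
      show "\<not> (finite J \<and> card J = Suc 1)" using False by (simp add: numeral_2_eq_2)
    qed
    moreover have "\<not> (J \<subseteq> {..<n} \<and> card J = 2)" using False finite_subset by blast
    ultimately show ?thesis using v by (simp add: WSE_def)
  qed
qed

lemma spencer_exact:
  assumes "j = 1 \<or> j = 2" "u \<in> WSE n m j p" "spencer u = (\<lambda>_ _ _. 0)"
  shows "\<exists>z\<in>WSE n m (j - 1) (Suc p). spencer z = u"
proof (cases "j = 1")
  case True
  then show ?thesis
    using assms(2,3) spencer_contr0_WSE spencer_spencer_contr0 by (intro bexI) auto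
next
  case False
  then have "j = 2" using assms(1) by simp
  then show ?thesis
    using assms(2,3) spencer_contr1_WSE spencer_spencer_contr1 by (intro bexI) auto
qed

section \<open>The symbol maps \<open>\<sigma>\<^sub>t(\<Phi>)\<close>\<close>

definition sigma_sum :: "nat \<Rightarrow> nat \<Rightarrow> nat \<Rightarrow> (nat \<Rightarrow> (nat \<Rightarrow> nat) \<Rightarrow> nat \<Rightarrow> 'a::field) \<Rightarrow>
    ((nat \<Rightarrow> nat) \<Rightarrow> nat \<Rightarrow> 'a) \<Rightarrow> (nat \<Rightarrow> nat) \<Rightarrow> nat \<Rightarrow> 'a" where
  "sigma_sum n m q A w rho tau = (\<Sum>mu\<in>mi n q. \<Sum>k<m. A tau mu k * w (\<lambda>i. mu i + rho i) k)"

lemma sigmat_eq: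
  "sigmat n m m0 q A t w nu tau = (if nu \<in> mi n t \<and> tau < m0 then sigma_sum n m q A w nu tau else 0)"
  by (simp add: sigmat_def sigma_sum_def)

lemma sigma_sum_shift:
  "sigma_sum n m q A (\<lambda>mu k. w (\<lambda>i. mu i + nu i) k) rho tau = sigma_sum n m q A w (\<lambda>i. rho i + nu i) tau"
  by (simp add: sigma_sum_def add.assoc)

lemma sigmat_zero: "sigmat n m m0 q A t (\<lambda>_ _. 0) = (\<lambda>_ _. 0)"
  by (simp add: sigmat_def fun_eq_iff)

lemma sigmat_diff:
  "sigmat n m m0 q A t (\<lambda>mu k. a mu k - b mu k) =
   (\<lambda>nu tau. sigmat n m m0 q A t a nu tau - sigmat n m m0 q A t b nu tau)"
  by (simp add: sigmat_def fun_eq_iff sum_subtractf right_diff_distrib)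

lemma sigmat_SE: "sigmat n m m0 q A t w \<in> SE n m0 t"
  by (simp add: SE_def sigmat_def)

lemma SE_shift: "w \<in> SE n m (p + r) \<Longrightarrow> nu \<in> mi n r \<Longrightarrow> (\<lambda>mu k. w (\<lambda>i. mu i + nu i) k) \<in> SE n m p"
  unfolding SE_def using mi_add_cancel by blast

lemma SE_incr: "w \<in> SE n m (Suc p) \<Longrightarrow> (\<lambda>mu k. w (incr i mu) k) \<in> SE n m p"
  unfolding SE_def using incr_in_mi_iff by blast

lemma SE_eqI_incr:
  assumes "x \<in> SE n m (Suc p)" "y \<in> SE n m (Suc p)"
    and "\<And>i. i < n \<Longrightarrow> (\<lambda>mu k. x (incr i mu) k) = (\<lambda>mu k. y (incr i mu) k)"
  shows "x = y"
proof (intro ext)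
  fix rho k
  show "x rho k = y rho k"
  proof (cases "rho \<in> mi n (Suc p)")
    case True
    then obtain c where "c < n" "0 < rho c" by (rule mi_Suc_obtain_pos)
    then show ?thesis
      using fun_cong[OF fun_cong[OF assms(3)[OF \<open>c < n\<close>], of "decr c rho"], of k]
      by (simp add: incr_decr)
  next
    case False
    then show ?thesis using assms(1,2) by (simp add: SE_def)
  qed
qed

lemma sigma_sum_spencer:
  "sigma_sum n m q A (spencer u J) nu tau =
   (\<Sum>i\<in>J. (-1) ^ card {l\<in>J. l < i} * sigma_sum n m q A (u (J - {i})) (incr i nu) tau)"
proof -
  have shift: "incr i (\<lambda>j. mu j + nu j) = (\<lambda>j. mu j + incr i nu j)" for mu i
    by (auto simp: fun_eq_iff)
  define G where "G mu k i = A tau mu k *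
      ((-1) ^ card {l\<in>J. l < i} * u (J - {i}) (\<lambda>j. mu j + incr i nu j) k)" for mu k i
  have "sigma_sum n m q A (spencer u J) nu tau = (\<Sum>mu\<in>mi n q. \<Sum>k<m. \<Sum>i\<in>J. G mu k i)"
    unfolding sigma_sum_def spencer_def G_def by (simp add: shift sum_distrib_left)
  also have "\<dots> = (\<Sum>i\<in>J. \<Sum>mu\<in>mi n q. \<Sum>k<m. G mu k i)"
    by (simp add: sum.swap[of _ J])
  also have "\<dots> = (\<Sum>i\<in>J. (-1) ^ card {l\<in>J. l < i} * sigma_sum n m q A (u (J - {i})) (incr i nu) tau)"
    unfolding sigma_sum_def G_def by (simp add: sum_distrib_left mult.left_commute)
  finally show ?thesis .
qed

lemma sigma_sum_incr_eq_0:
  assumes "w \<in> SE n m t" "n \<le> i"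
  shows "sigma_sum n m q A w (incr i nu) tau = 0"
proof -
  have "(\<lambda>j. mu j + incr i nu j) \<notin> mi n t" for mu
    using assms(2) by (auto simp: mi_def dest: spec[of _ i])
  then show ?thesis using assms(1) by (simp add: sigma_sum_def SE_def)
qed

lemma sigmat_spencer:
  assumes u: "\<And>I. u I \<in> SE n m (q + Suc p)"
  shows "sigmat n m m0 q A p (spencer u J) = spencer (\<lambda>I. sigmat n m m0 q A (Suc p) (u I)) J"
proof (intro ext)
  fix nu tau
  have incr_term: "sigmat n m m0 q A (Suc p) (u I) (incr i nu) tau =
     (if nu \<in> mi n p \<and> tau < m0 then sigma_sum n m q A (u I) (incr i nu) tau else 0)" for I i
    using sigma_sum_incr_eq_0[OF u, of i] by (cases "i < n") (simp_all add: sigmat_eq incr_in_mi_iff)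
  show "sigmat n m m0 q A p (spencer u J) nu tau = spencer (\<lambda>I. sigmat n m m0 q A (Suc p) (u I)) J nu tau"
    unfolding spencer_def incr_term sigmat_eq[of _ _ _ _ _ p] sigma_sum_spencer[unfolded spencer_def]
    by (cases "nu \<in> mi n p \<and> tau < m0") auto
qed

section \<open>Prolongations of kernel and image\<close>

lemma SE_eq_0_iff_shifts:
  assumes "y \<in> SE n m (a + r)"
  shows "y = (\<lambda>_ _. 0) \<longleftrightarrow> (\<forall>nu\<in>mi n r. (\<lambda>mu k. y (\<lambda>i. mu i + nu i) k) = (\<lambda>_ _. 0))"
proof (intro iffI ballI ext)
  fix rho k
  assume shifts: "\<forall>nu\<in>mi n r. (\<lambda>mu k. y (\<lambda>i. mu i + nu i) k) = (\<lambda>_ _. 0)"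
  show "y rho k = 0"
  proof (cases "rho \<in> mi n (a + r)")
    case True
    then obtain v1 v2 where "v2 \<in> mi n r" "rho = (\<lambda>i. v1 i + v2 i)"
      using mi_add_decomp by blast
    then show ?thesis using fun_cong[OF fun_cong[OF bspec[OF shifts]], of v2 v1 k] by simp
  next
    case False
    then show ?thesis using assms by (simp add: SE_def)
  qed
qed simp

lemma sigmat_shift:
  assumes "nu \<in> mi n r"
  shows "(\<lambda>mu k. sigmat n m m0 q A (t + r) y (\<lambda>i. mu i + nu i) k) =
         sigmat n m m0 q A t (\<lambda>mu k. y (\<lambda>i. mu i + nu i) k)"
proof (intro ext)
  fix rho tau
  have "(\<lambda>i. rho i + nu i) \<in> mi n (t + r) \<longleftrightarrow> rho \<in> mi n t"
    using mi_add[of rho n t nu r] mi_add_cancel[of rho nu n t r] assms by blast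
  then show "sigmat n m m0 q A (t + r) y (\<lambda>i. rho i + nu i) tau =
      sigmat n m m0 q A t (\<lambda>mu k. y (\<lambda>i. mu i + nu i) k) rho tau"
    by (simp add: sigmat_eq sigma_sum_shift)
qed

lemma prol_sigmat_kernel:
  "prol n m {x \<in> SE n m (q + a). sigmat n m m0 q A a x = (\<lambda>_ _. 0)} (q + a) r =
   {x \<in> SE n m (q + a + r). sigmat n m m0 q A (a + r) x = (\<lambda>_ _. 0)}"
proof -
  have "sigmat n m m0 q A (a + r) x = (\<lambda>_ _. 0) \<longleftrightarrow>
      (\<forall>nu\<in>mi n r. sigmat n m m0 q A a (\<lambda>mu k. x (\<lambda>i. mu i + nu i) k) = (\<lambda>_ _. 0))" for x
    unfolding SE_eq_0_iff_shifts[OF sigmat_SE] by (intro ball_cong refl) (simp add: sigmat_shift)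
  then show ?thesis using SE_shift[of _ n m "q + a" r] by (auto simp: prol_def add.assoc)
qed

lemma prol_prol_gsym:
  "prol n m (prol n m (gsym n m m0 q A) q s) (q + s) r =
   {x \<in> SE n m (q + s + r). sigmat n m m0 q A (s + r) x = (\<lambda>_ _. 0)}"
  using prol_sigmat_kernel[of n m q 0 m0 A s] prol_sigmat_kernel[of n m q s m0 A r]
  by (simp add: gsym_def)

lemma WG_prol_gsym_iff:
  "w \<in> WG n m (prol n m (gsym n m m0 q A) q s) (q + s) r j \<longleftrightarrow>
   w \<in> WSE n m j (q + s + r) \<and> (\<forall>I. sigmat n m m0 q A (s + r) (w I) = (\<lambda>_ _. 0))"
  (is "_ \<longleftrightarrow> ?W \<and> (\<forall>I. ?ker I)")
proof -
  have "w \<in> WG n m (prol n m (gsym n m m0 q A) q s) (q + s) r j \<longleftrightarrow>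
      ?W \<and> (\<forall>I. I \<subseteq> {..<n} \<and> card I = j \<longrightarrow> w I \<in> SE n m (q + s + r) \<and> ?ker I)"
    by (simp add: WG_def prol_prol_gsym)
  also have "\<dots> \<longleftrightarrow> ?W \<and> (\<forall>I. ?ker I)"
  proof
    assume l: "?W \<and> (\<forall>I. I \<subseteq> {..<n} \<and> card I = j \<longrightarrow> w I \<in> SE n m (q + s + r) \<and> ?ker I)"
    have "?ker I" for I
    proof (cases "I \<subseteq> {..<n} \<and> card I = j")
      case True
      then show ?thesis using l by simp
    next
      case False
      then show ?thesis using WSE_eq_0[OF conjunct1[OF l] False] by (simp add: sigmat_zero)
    qed
    then show "?W \<and> (\<forall>I. ?ker I)" using l by simp
  next
    assume "?W \<and> (\<forall>I. ?ker I)"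
    then show "?W \<and> (\<forall>I. I \<subseteq> {..<n} \<and> card I = j \<longrightarrow> w I \<in> SE n m (q + s + r) \<and> ?ker I)"
      using WSE_component[of w n m j "q + s + r"] by simp
  qed
  finally show ?thesis .
qed

lemma hsym_subset_prol: "hsym n m m0 q A (t + r) \<subseteq> prol n m0 (hsym n m m0 q A t) t r"
proof
  fix x
  assume "x \<in> hsym n m m0 q A (t + r)"
  then obtain y where y: "y \<in> SE n m (q + t + r)" "x = sigmat n m m0 q A (t + r) y"
    by (auto simp: hsym_def add.assoc)
  have "(\<lambda>mu k. x (\<lambda>i. mu i + nu i) k) \<in> hsym n m m0 q A t" if "nu \<in> mi n r" for nu
    unfolding y(2) sigmat_shift[OF that] hsym_def using SE_shift[OF y(1) that] by blast
  then show "x \<in> prol n m0 (hsym n m m0 q A t) t r"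
    using y sigmat_SE by (simp add: prol_def)
qed

lemma sigmat_form_WSE:
  assumes z: "z \<in> WSE n m j (q + t)"
  shows "(\<lambda>I. sigmat n m m0 q A t (z I)) \<in> WSE n m0 j t"
  unfolding WSE_def
proof (intro CollectI allI impI)
  fix I mu k
  assume h: "\<not> (I \<subseteq> {..<n} \<and> card I = j) \<or> mu \<notin> mi n t \<or> m0 \<le> k"
  show "sigmat n m m0 q A t (z I) mu k = 0"
  proof (cases "I \<subseteq> {..<n} \<and> card I = j")
    case True
    then show ?thesis using h by (auto simp: sigmat_eq)
  next
    case False
    then show ?thesis using WSE_eq_0[OF z False] by (simp add: sigmat_zero)
  qed
qed

lemma prol_incr:
  assumes x: "x \<in> prol n m h t (Suc r)" and "i < n"
  shows "(\<lambda>mu k. x (incr i mu) k) \<in> prol n m h t r"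
  unfolding prol_def
proof (intro CollectI conjI ballI)
  have "x \<in> SE n m (Suc (t + r))" using x by (simp add: prol_def)
  then show "(\<lambda>mu k. x (incr i mu) k) \<in> SE n m (t + r)" by (rule SE_incr)
next
  fix nu
  assume "nu \<in> mi n r"
  then have "incr i nu \<in> mi n (Suc r)" using \<open>i < n\<close> by (simp add: incr_in_mi_iff)
  then have "(\<lambda>mu k. x (\<lambda>j. mu j + incr i nu j) k) \<in> h"
    using x unfolding prol_def by blast
  moreover have "incr i (\<lambda>j. mu j + nu j) = (\<lambda>j. mu j + incr i nu j)" for mu
    by (auto simp: fun_eq_iff)
  ultimately show "(\<lambda>mu k. (\<lambda>mu k. x (incr i mu) k) (\<lambda>j. mu j + nu j) k) \<in> h"
    by simp
qed

section \<open>The diagram chase\<close>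

lemma hsym_form_lift:
  assumes w: "w \<in> WSE n m0 j t"
    and hsym: "\<And>I. I \<subseteq> {..<n} \<Longrightarrow> card I = j \<Longrightarrow> w I \<in> hsym n m m0 q A t"
  shows "\<exists>u\<in>WSE n m j (q + t). (\<lambda>I. sigmat n m m0 q A t (u I)) = w"
proof -
  have "\<exists>x. x \<in> SE n m (q + t) \<and> sigmat n m m0 q A t x = w I \<and>
      (\<not> (I \<subseteq> {..<n} \<and> card I = j) \<longrightarrow> x = (\<lambda>_ _. 0))" for I
  proof (cases "I \<subseteq> {..<n} \<and> card I = j")
    case True
    then show ?thesis using hsym[of I] by (auto simp: hsym_def)
  next
    case False
    then show ?thesis using WSE_eq_0[OF w False] by (auto simp: SE_def sigmat_zero)
  qed
  then have "\<forall>I. \<exists>x. x \<in> SE n m (q + t) \<and> sigmat n m m0 q A t x = w I \<and>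
      (\<not> (I \<subseteq> {..<n} \<and> card I = j) \<longrightarrow> x = (\<lambda>_ _. 0))" by blast
  from choice[OF this] obtain u where u: "\<And>I. u I \<in> SE n m (q + t) \<and> sigmat n m m0 q A t (u I) = w I \<and>
      (\<not> (I \<subseteq> {..<n} \<and> card I = j) \<longrightarrow> u I = (\<lambda>_ _. 0))"
    by blast
  have "u \<in> WSE n m j (q + t)"
    unfolding WSE_def
  proof (intro CollectI allI impI)
    fix I mu k
    assume h: "\<not> (I \<subseteq> {..<n} \<and> card I = j) \<or> mu \<notin> mi n (q + t) \<or> m \<le> k"
    show "u I mu k = 0"
    proof (cases "I \<subseteq> {..<n} \<and> card I = j")
      case True
      then show ?thesis using h u[of I] by (auto simp: SE_def)
    next
      case False
      then show ?thesis using u[of I] by simp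
    qed
  qed
  then show ?thesis using u by auto
qed

lemma closed_sigmat_form_exact:
  assumes acyc: "k_acyclic n m (q + s) (prol n m (gsym n m m0 q A) q s) k"
    and j: "j = 1 \<or> j = 2" "Suc j \<le> k" and "s < t"
    and u: "u \<in> WSE n m j (q + t)"
    and closed: "spencer (\<lambda>I. sigmat n m m0 q A t (u I)) = (\<lambda>_ _ _. 0)"
  shows "\<exists>z\<in>WSE n m (j - 1) (Suc (q + t)).
           spencer (\<lambda>I. sigmat n m m0 q A (Suc t) (z I)) = (\<lambda>I. sigmat n m m0 q A t (u I))"
proof -
  let ?g = "prol n m (gsym n m m0 q A) q s"
  let ?\<sigma> = "sigmat n m m0 q A"
  obtain r where t: "t = s + Suc r" using less_imp_Suc_add[OF \<open>s < t\<close>] by auto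
  have u_comp: "\<And>I. u I \<in> SE n m (q + Suc (s + r))" using WSE_component[OF u] t by simp
  have "spencer u \<in> WSE n m (Suc j) (q + s + r)"
    using spencer_WSE[of u n m j "q + s + r"] u t by (simp add: add.assoc)
  moreover have "?\<sigma> (s + r) (spencer u J) = (\<lambda>_ _. 0)" for J
  proof -
    have "?\<sigma> (s + r) (spencer u J) = spencer (\<lambda>I. ?\<sigma> t (u I)) J"
      using sigmat_spencer[OF u_comp, where J = J] t by simp
    then show ?thesis using closed by simp
  qed
  ultimately have "spencer u \<in> WG n m ?g (q + s) r (Suc j)"
    by (simp add: WG_prol_gsym_iff)
  then obtain y where y: "y \<in> WG n m ?g (q + s) (Suc r) j" "spencer y = spencer u"
    using acyc[unfolded k_acyclic_def, rule_format, where r = r and j = "Suc j" and w = "spencer u"]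
      j spencer_spencer
    by auto
  then have y_W: "y \<in> WSE n m j (q + t)" and y_ker: "\<And>I. ?\<sigma> t (y I) = (\<lambda>_ _. 0)"
    using t by (simp_all add: WG_prol_gsym_iff add.assoc)
  have "spencer (\<lambda>I mu k. u I mu k - y I mu k) = (\<lambda>_ _ _. 0)"
    using y(2) by (simp add: spencer_diff)
  then obtain z where z: "z \<in> WSE n m (j - 1) (Suc (q + t))"
      "spencer z = (\<lambda>I mu k. u I mu k - y I mu k)"
    using spencer_exact[OF j(1) WSE_diff[OF u y_W]] by blast
  have "spencer (\<lambda>I. ?\<sigma> (Suc t) (z I)) J = ?\<sigma> t (u J)" for J
  proof -
    have "spencer (\<lambda>I. ?\<sigma> (Suc t) (z I)) J = ?\<sigma> t (spencer z J)"
      by (rule sigmat_spencer[symmetric]) (use WSE_component[OF z(1)] in simp)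
    also have "\<dots> = ?\<sigma> t (u J)"
      unfolding z(2) sigmat_diff y_ker by simp
    finally show ?thesis .
  qed
  then show ?thesis using z(1) by blast
qed

lemma hsym_SucI:
  assumes acyc: "k_acyclic n m (q + s) (prol n m (gsym n m m0 q A) q s) 2" and "s < t"
    and v: "v \<in> SE n m0 (Suc t)"
    and shifts: "\<And>i. i < n \<Longrightarrow> (\<lambda>mu k. v (incr i mu) k) \<in> hsym n m m0 q A t"
  shows "v \<in> hsym n m m0 q A (Suc t)"
proof -
  define v0 where "v0 I = (if I = {} then v else (\<lambda>_ _. 0))" for I :: "nat set"
  have "v0 \<in> WSE n m0 0 (Suc t)" using v by (simp add: WSE_def SE_def v0_def)
  then have dv0: "spencer v0 \<in> WSE n m0 1 t" using spencer_WSE[of v0 n m0 0 t] by simp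
  have dv0_incr: "spencer v0 {i} = (\<lambda>mu k. v (incr i mu) k)" for i
    by (intro ext) (simp add: spencer_singleton v0_def)
  have "spencer v0 I \<in> hsym n m m0 q A t" if "I \<subseteq> {..<n}" "card I = 1" for I
  proof -
    obtain i where "I = {i}" using \<open>card I = 1\<close> by (auto simp: card_1_singleton_iff)
    then show ?thesis using shifts[of i] dv0_incr[of i] \<open>I \<subseteq> {..<n}\<close> by simp
  qed
  then obtain u where u: "u \<in> WSE n m 1 (q + t)" "(\<lambda>I. sigmat n m m0 q A t (u I)) = spencer v0"
    using hsym_form_lift[OF dv0] by blast
  moreover have "spencer (\<lambda>I. sigmat n m m0 q A t (u I)) = (\<lambda>_ _ _. 0)"
    using u(2) spencer_spencer by simp
  ultimately obtain z where z: "z \<in> WSE n m 0 (Suc (q + t))"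
      "spencer (\<lambda>I. sigmat n m m0 q A (Suc t) (z I)) = spencer v0"
    using closed_sigmat_form_exact[OF acyc _ _ \<open>s < t\<close>, of 1 u] by auto
  have "v = sigmat n m m0 q A (Suc t) (z {})"
  proof (rule SE_eqI_incr[OF v sigmat_SE])
    fix i
    show "(\<lambda>mu k. v (incr i mu) k) = (\<lambda>mu k. sigmat n m m0 q A (Suc t) (z {}) (incr i mu) k)"
      using fun_cong[OF z(2), of "{i}"] dv0_incr by (simp add: spencer_singleton fun_eq_iff)
  qed
  then show ?thesis using WSE_component[OF z(1)] by (auto simp: hsym_def)
qed

lemma prol_hsym:
  assumes acyc: "k_acyclic n m (q + s) (prol n m (gsym n m m0 q A) q s) 2" and "s < t"
  shows "prol n m0 (hsym n m m0 q A t) t r = hsym n m m0 q A (t + r)"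
proof
  show "prol n m0 (hsym n m m0 q A t) t r \<subseteq> hsym n m m0 q A (t + r)"
  proof (induction r)
    case 0
    then show ?case by (auto simp: prol_def mi_0)
  next
    case (Suc r)
    show ?case
    proof
      fix x
      assume x: "x \<in> prol n m0 (hsym n m m0 q A t) t (Suc r)"
      then have x_SE: "x \<in> SE n m0 (Suc (t + r))" by (simp add: prol_def)
      then show "x \<in> hsym n m m0 q A (t + Suc r)"
        using hsym_SucI[OF acyc, of "t + r" x] \<open>s < t\<close> x_SE Suc.IH prol_incr[OF x] by auto
    qed
  qed
  show "hsym n m m0 q A (t + r) \<subseteq> prol n m0 (hsym n m m0 q A t) t r"
    by (rule hsym_subset_prol)
qed

lemma WG_hsym:
  assumes "k_acyclic n m (q + s) (prol n m (gsym n m m0 q A) q s) 2" and "s < t"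
  shows "WG n m0 (hsym n m m0 q A t) t r j =
    {w \<in> WSE n m0 j (t + r). \<forall>I. I \<subseteq> {..<n} \<and> card I = j \<longrightarrow> w I \<in> hsym n m m0 q A (t + r)}"
  unfolding WG_def prol_hsym[OF assms] ..

lemma sigmat_form_WG_hsym:
  assumes "k_acyclic n m (q + s) (prol n m (gsym n m m0 q A) q s) 2" and "s < t"
    and z: "z \<in> WSE n m j (q + (t + r))"
  shows "(\<lambda>I. sigmat n m m0 q A (t + r) (z I)) \<in> WG n m0 (hsym n m m0 q A t) t r j"
proof -
  have "sigmat n m m0 q A (t + r) (z I) \<in> hsym n m m0 q A (t + r)" for I
    unfolding hsym_def using WSE_component[OF z] by blast
  then show ?thesis unfolding WG_hsym[OF assms(1,2)] using sigmat_form_WSE[OF z] by blast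
qed

theorem corollary3p11:
  fixes A :: "nat \<Rightarrow> (nat \<Rightarrow> nat) \<Rightarrow> nat \<Rightarrow> 'a::field"
    and n m m0 q s s' :: nat
  assumes "k_acyclic n m (q + s) (prol n m (gsym n m m0 q A) q s) 2"
    and "k_acyclic n m (q + s + s') (prol n m (gsym n m m0 q A) q (s + s')) 3"
  shows "k_acyclic n m0 (s + s' + 1) (hsym n m m0 q A (s + s' + 1)) 2"
  unfolding k_acyclic_def
proof (intro allI impI)
  fix r j w
  let ?\<sigma> = "sigmat n m m0 q A"
  let ?h = "hsym n m m0 q A (s + s' + 1)"
  define t where "t = s + s' + 1 + r"
  assume h: "1 \<le> j \<and> j \<le> 2 \<and> w \<in> WG n m0 ?h (s + s' + 1) r j \<and> spencer w = (\<lambda>_ _ _. 0)"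
  have "s < s + s' + 1" by simp
  note WG_h = WG_hsym[OF assms(1) this]
  from h have w: "w \<in> WSE n m0 j t"
    "\<And>I. I \<subseteq> {..<n} \<Longrightarrow> card I = j \<Longrightarrow> w I \<in> hsym n m m0 q A t"
    unfolding WG_h t_def by simp_all
  obtain u where u: "u \<in> WSE n m j (q + t)" "(\<lambda>I. ?\<sigma> t (u I)) = w"
    using hsym_form_lift[OF w] by blast
  have "j = 1 \<or> j = 2" "Suc j \<le> 3" "s + s' < t" using h t_def by auto
  then obtain z where z: "z \<in> WSE n m (j - 1) (Suc (q + t))"
      "spencer (\<lambda>I. ?\<sigma> (Suc t) (z I)) = w"
    using closed_sigmat_form_exact[OF assms(2)[unfolded add.assoc] _ _ _ u(1)] u(2) h by blast
  have "(\<lambda>I. ?\<sigma> (Suc t) (z I)) \<in> WG n m0 ?h (s + s' + 1) (Suc r) (j - 1)"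
    using sigmat_form_WG_hsym[OF assms(1) \<open>s < s + s' + 1\<close>, of z "j - 1" "Suc r"] z(1)
    unfolding t_def by simp
  then show "\<exists>eta\<in>WG n m0 ?h (s + s' + 1) (Suc r) (j - 1). spencer eta = w"
    using z(2) by blast
qed

end
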